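(* Let $R$ be a Noetherian domain of prime characteristic $p>0$, and let $S\supseteq R$ be a domain that is finitely generated as an $R$-module. If tight closure commutes with localization in $S$, then tight closure commutes with localization in $R$.
   Context: All rings are commutative and Noetherian of prime characteristic $p>0$. For an ideal $I$ of a ring $A$ and $q=p^e$, $I^{[q]}$ denotes the ideal generated by $\{x^q : x\in I\}$. The tight closure $I^*$ of $I$ is the set of $z\in A$ for which there exists $c\in A$, not in any minimal prime of $A$, with $c z^q\in I^{[q]}$ for all $q=p^e \gg 0$. We say tight closure commutes with localization in $A$ if for every ideal $I$ of $A$ and every multiplicative system $U\subseteq A$, one has $I^*A[U^{-1}] = (IA[U^{-1}])^*$, where the right side is the tight closure in the ring $A[U^{-1}]$. *)

theory Defs
  imports "HOL-Computational_Algebra.Primes"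
begin

text \<open>Rings are modelled as subrings of an ambient field 'k. Every domain embeds in
its fraction field, and a localization A[U^-1] of a domain A (with 0 not in U) is
the subring of the field consisting of fractions a/u.\<close>

definition subring :: "'k::field set \<Rightarrow> bool" where
  "subring A \<longleftrightarrow> 0 \<in> A \<and> 1 \<in> A \<and> (\<forall>x\<in>A. \<forall>y\<in>A. x + y \<in> A \<and> x - y \<in> A \<and> x * y \<in> A)"

definition ideal_of :: "'k::field set \<Rightarrow> 'k set \<Rightarrow> bool" where
  "ideal_of A I \<longleftrightarrow> I \<subseteq> A \<and> 0 \<in> I \<and> (\<forall>x\<in>I. \<forall>y\<in>I. x + y \<in> I) \<and>
     (\<forall>a\<in>A. \<forall>x\<in>I. a * x \<in> I)"

definition gen_ideal :: "'k::field set \<Rightarrow> 'k set \<Rightarrow> 'k set" where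
  "gen_ideal A X = \<Inter>{I. ideal_of A I \<and> X \<subseteq> I}"

definition noetherian :: "'k::field set \<Rightarrow> bool" where
  "noetherian A \<longleftrightarrow> (\<forall>I. ideal_of A I \<longrightarrow> (\<exists>F. finite F \<and> F \<subseteq> I \<and> I = gen_ideal A F))"

definition prime_ideal :: "'k::field set \<Rightarrow> 'k set \<Rightarrow> bool" where
  "prime_ideal A P \<longleftrightarrow> ideal_of A P \<and> P \<noteq> A \<and>
     (\<forall>a\<in>A. \<forall>b\<in>A. a * b \<in> P \<longrightarrow> a \<in> P \<or> b \<in> P)"

definition minimal_prime :: "'k::field set \<Rightarrow> 'k set \<Rightarrow> bool" where
  "minimal_prime A P \<longleftrightarrow> prime_ideal A P \<and> (\<forall>Q. prime_ideal A Q \<and> Q \<subseteq> P \<longrightarrow> Q = P)"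

definition frob_power :: "'k::field set \<Rightarrow> nat \<Rightarrow> 'k set \<Rightarrow> 'k set" where
  "frob_power A q I = gen_ideal A ((\<lambda>x. x ^ q) ` I)"

definition tight_closure :: "'k::field set \<Rightarrow> nat \<Rightarrow> 'k set \<Rightarrow> 'k set" where
  "tight_closure A p I = {z \<in> A. \<exists>c\<in>A. (\<forall>P. minimal_prime A P \<longrightarrow> c \<notin> P) \<and>
      (\<exists>e0. \<forall>e\<ge>e0. c * z ^ (p ^ e) \<in> frob_power A (p ^ e) I)}"

definition mult_system :: "'k::field set \<Rightarrow> 'k set \<Rightarrow> bool" where
  "mult_system A U \<longleftrightarrow> U \<subseteq> A \<and> 1 \<in> U \<and> (\<forall>u\<in>U. \<forall>v\<in>U. u * v \<in> U)"

definition localize :: "'k::field set \<Rightarrow> 'k set \<Rightarrow> 'k set" where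
  "localize A U = {a / u | a u. a \<in> A \<and> u \<in> U}"

text \<open>Tight closure commutes with localization in A (multiplicative systems not
containing 0; if 0 is in U both sides live in the zero ring and agree trivially).\<close>
definition tc_commutes_loc :: "'k::field set \<Rightarrow> nat \<Rightarrow> bool" where
  "tc_commutes_loc A p \<longleftrightarrow> (\<forall>I U. ideal_of A I \<and> mult_system A U \<and> 0 \<notin> U \<longrightarrow>
     gen_ideal (localize A U) (tight_closure A p I) =
     tight_closure (localize A U) p (gen_ideal (localize A U) I))"

definition finite_module_over :: "'k::field set \<Rightarrow> 'k set \<Rightarrow> bool" where
  "finite_module_over R S \<longleftrightarrow> (\<exists>F. finite F \<and> F \<subseteq> S \<and>
     S = {\<Sum>f\<in>F. r f * f | r. \<forall>f\<in>F. r f \<in> R})"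

end

theory Submission
  imports Defs
begin

(*
  For every nonzero c in S there is an R-linear map phi from S to R with phi c \<noteq> 0: adjoin the
  module generators of S one at a time; a new generator f either has a nonzero multiple r f in the
  span N of the previous ones, and then phi = psi (r * _), or it splits off a free summand R f,
  and then one takes its coordinate or psi composed with the projection onto N.  Applying phi to
  c x^q \<in> (IS)^[q] = (I^[q])S gives phi(c) x^q \<in> I^[q]; hence (IS)^* \<inter> R \<subseteq> I^*.

  Persistence gives I^* R_U \<subseteq> (I R_U)^* in any domain.  Conversely, if z \<in> (I R_U)^* then
  z \<in> (I S_U)^* = (IS)^* S_U, and clearing denominators writes z = y/u with
  y \<in> R \<inter> (IS)^* \<subseteq> I^*.
*)

lemma subring_power: "subring A \<Longrightarrow> x \<in> A \<Longrightarrow> x ^ n \<in> A"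
  by (induction n) (auto simp: subring_def)

lemma ideal_ofI:
  assumes "I \<subseteq> A" "0 \<in> I" "\<And>x y. x \<in> I \<Longrightarrow> y \<in> I \<Longrightarrow> x + y \<in> I"
    "\<And>a x. a \<in> A \<Longrightarrow> x \<in> I \<Longrightarrow> a * x \<in> I"
  shows "ideal_of A I"
  using assms unfolding ideal_of_def by blast

lemma ideal_of_zero: "ideal_of A I \<Longrightarrow> 0 \<in> I"
  unfolding ideal_of_def by blast

lemma ideal_of_add: "ideal_of A I \<Longrightarrow> x \<in> I \<Longrightarrow> y \<in> I \<Longrightarrow> x + y \<in> I"
  unfolding ideal_of_def by blast

lemma ideal_of_mult: "ideal_of A I \<Longrightarrow> a \<in> A \<Longrightarrow> x \<in> I \<Longrightarrow> a * x \<in> I"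
  unfolding ideal_of_def by blast

lemma ideal_of_gen_ideal:
  assumes "subring A" "X \<subseteq> A"
  shows "ideal_of A (gen_ideal A X)"
proof -
  have "ideal_of A A"
    using assms(1) by (auto simp: subring_def ideal_of_def)
  then have "gen_ideal A X \<subseteq> A"
    using assms(2) unfolding gen_ideal_def by blast
  then show ?thesis
    unfolding gen_ideal_def by (intro ideal_ofI) (auto simp: ideal_of_def)
qed

lemma gen_ideal_subset: "subring A \<Longrightarrow> X \<subseteq> A \<Longrightarrow> gen_ideal A X \<subseteq> A"
  using ideal_of_gen_ideal unfolding ideal_of_def by blast

lemma subset_gen_ideal: "X \<subseteq> gen_ideal A X"
  unfolding gen_ideal_def by blast

lemma gen_ideal_least: "ideal_of A J \<Longrightarrow> X \<subseteq> J \<Longrightarrow> gen_ideal A X \<subseteq> J"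
  unfolding gen_ideal_def by blast

lemma gen_ideal_ideal: "ideal_of A J \<Longrightarrow> gen_ideal A J = J"
  using gen_ideal_least subset_gen_ideal by blast

lemma gen_ideal_mono:
  assumes "subring A" "subring B" "A \<subseteq> B" "X \<subseteq> A" "X \<subseteq> Y" "Y \<subseteq> B"
  shows "gen_ideal A X \<subseteq> gen_ideal B Y"
proof -
  have "ideal_of B (gen_ideal B Y)"
    using ideal_of_gen_ideal assms(2,6) by blast
  then have "ideal_of A (gen_ideal B Y \<inter> A)"
    using assms(1,3) unfolding ideal_of_def subring_def by blast
  moreover have "X \<subseteq> gen_ideal B Y \<inter> A"
    using subset_gen_ideal assms(4,5) by blast
  ultimately show ?thesis
    using gen_ideal_least by blast
qed

lemma frobenius_add:
  fixes x y :: "'a::comm_semiring_1"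
  assumes "prime p" "CHAR('a) = p"
  shows "(x + y) ^ p ^ e = x ^ p ^ e + y ^ p ^ e"
  using assms by (intro freshmans_dream') simp_all

lemma ideal_of_frob_power: "subring A \<Longrightarrow> I \<subseteq> A \<Longrightarrow> ideal_of A (frob_power A q I)"
  unfolding frob_power_def by (rule ideal_of_gen_ideal) (auto intro: subring_power)

lemma frob_power_mono:
  assumes "subring A" "subring B" "A \<subseteq> B" "I \<subseteq> A" "I \<subseteq> J" "J \<subseteq> B"
  shows "frob_power A q I \<subseteq> frob_power B q J"
  unfolding frob_power_def using assms by (intro gen_ideal_mono) (auto intro: subring_power)

lemma frob_power_gen_ideal:
  fixes A I :: "'k::field set"
  assumes A: "subring A" and I: "I \<subseteq> A" and "prime p" "CHAR('k) = p"
  shows "frob_power A (p ^ e) (gen_ideal A I) = frob_power A (p ^ e) I"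
proof -
  let ?q = "p ^ e"
  show ?thesis
  proof
    have J: "ideal_of A (frob_power A ?q I)"
      using ideal_of_frob_power A I .
    let ?K = "{x \<in> A. x ^ ?q \<in> frob_power A ?q I}"
    have "ideal_of A ?K"
    proof (rule ideal_ofI)
      show "0 \<in> ?K"
        using A ideal_of_zero[OF J] assms(3) by (simp add: subring_def prime_gt_0_nat power_0_left)
    next
      fix x y assume "x \<in> ?K" "y \<in> ?K"
      then show "x + y \<in> ?K"
        using A ideal_of_add[OF J] frobenius_add[OF assms(3,4)] by (simp add: subring_def)
    next
      fix a x assume "a \<in> A" "x \<in> ?K"
      then show "a * x \<in> ?K"
        using A ideal_of_mult[OF J] subring_power[OF A]
        by (simp add: subring_def power_mult_distrib)
    qed auto
    moreover have "x ^ ?q \<in> frob_power A ?q I" if "x \<in> I" for x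
      unfolding frob_power_def using that by (intro subsetD[OF subset_gen_ideal] imageI)
    then have "I \<subseteq> ?K"
      using I by blast
    ultimately have "gen_ideal A I \<subseteq> ?K"
      by (rule gen_ideal_least)
    then show "frob_power A ?q (gen_ideal A I) \<subseteq> frob_power A ?q I"
      unfolding frob_power_def[of A ?q "gen_ideal A I"]
      by (intro gen_ideal_least[OF J]) blast
    show "frob_power A ?q I \<subseteq> frob_power A ?q (gen_ideal A I)"
      using A I ideal_of_gen_ideal[OF A I] subset_gen_ideal
      by (intro frob_power_mono) (auto simp: ideal_of_def)
  qed
qed

lemma minimal_prime_iff:
  assumes "subring A"
  shows "minimal_prime A P \<longleftrightarrow> P = {0}"
proof -
  have zero: "prime_ideal A {0}"
    using assms unfolding prime_ideal_def ideal_of_def subring_def by auto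
  have "{0} \<subseteq> Q" if "prime_ideal A Q" for Q
    using that ideal_of_zero unfolding prime_ideal_def by blast
  then show ?thesis
    using zero unfolding minimal_prime_def by blast
qed

lemma mem_tight_closure_iff:
  assumes "subring A"
  shows "z \<in> tight_closure A p I \<longleftrightarrow> z \<in> A \<and>
    (\<exists>c\<in>A. c \<noteq> 0 \<and> (\<forall>\<^sub>F e in sequentially. c * z ^ p ^ e \<in> frob_power A (p ^ e) I))"
  unfolding tight_closure_def minimal_prime_iff[OF assms] eventually_sequentially by blast

lemma tight_closure_subset: "tight_closure A p I \<subseteq> A"
  unfolding tight_closure_def by blast

lemma tight_closureI:
  assumes "subring A" "z \<in> A" "c \<in> A" "c \<noteq> 0"
    "\<forall>\<^sub>F e in sequentially. c * z ^ p ^ e \<in> frob_power A (p ^ e) I"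
  shows "z \<in> tight_closure A p I"
  using assms unfolding mem_tight_closure_iff[OF assms(1)] by blast

lemma tight_closureE:
  assumes "subring A" "z \<in> tight_closure A p I"
  obtains c where "z \<in> A" "c \<in> A" "c \<noteq> 0"
    "\<forall>\<^sub>F e in sequentially. c * z ^ p ^ e \<in> frob_power A (p ^ e) I"
  using assms unfolding mem_tight_closure_iff[OF assms(1)] by blast

lemma tight_closure_add:
  fixes A I :: "'k::field set"
  assumes A: "subring A" and I: "I \<subseteq> A" and p: "prime p" "CHAR('k) = p"
    and "x \<in> tight_closure A p I" "y \<in> tight_closure A p I"
  shows "x + y \<in> tight_closure A p I"
proof -
  have F: "ideal_of A (frob_power A (p ^ e) I)" for e
    using ideal_of_frob_power A I .
  obtain c where
    x: "x \<in> A" "c \<in> A" "c \<noteq> 0" "\<forall>\<^sub>F e in sequentially. c * x ^ p ^ e \<in> frob_power A (p ^ e) I"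
    by (rule tight_closureE[OF A assms(5)])
  obtain d where
    y: "y \<in> A" "d \<in> A" "d \<noteq> 0" "\<forall>\<^sub>F e in sequentially. d * y ^ p ^ e \<in> frob_power A (p ^ e) I"
    by (rule tight_closureE[OF A assms(6)])
  have "\<forall>\<^sub>F e in sequentially. c * d * (x + y) ^ p ^ e \<in> frob_power A (p ^ e) I"
    using eventually_conj[OF x(4) y(4)]
  proof eventually_elim
    case (elim e)
    have "c * d * (x + y) ^ p ^ e = d * (c * x ^ p ^ e) + c * (d * y ^ p ^ e)"
      using frobenius_add[OF p] by (simp add: algebra_simps)
    then show ?case
      using elim x(2) y(2) ideal_of_add[OF F] ideal_of_mult[OF F] by simp
  qed
  moreover have "x + y \<in> A" "c * d \<in> A"
    using x y A by (auto simp: subring_def)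
  ultimately show ?thesis
    using tight_closureI[OF A] x(3) y(3) by simp
qed

lemma tight_closure_mult:
  assumes A: "subring A" and I: "I \<subseteq> A" and a: "a \<in> A" and "x \<in> tight_closure A p I"
  shows "a * x \<in> tight_closure A p I"
proof -
  obtain c where
    x: "x \<in> A" "c \<in> A" "c \<noteq> 0" "\<forall>\<^sub>F e in sequentially. c * x ^ p ^ e \<in> frob_power A (p ^ e) I"
    by (rule tight_closureE[OF A assms(4)])
  have "\<forall>\<^sub>F e in sequentially. c * (a * x) ^ p ^ e \<in> frob_power A (p ^ e) I"
    using x(4)
  proof eventually_elim
    case (elim e)
    then have "a ^ p ^ e * (c * x ^ p ^ e) \<in> frob_power A (p ^ e) I"
      using ideal_of_mult[OF ideal_of_frob_power[OF A I]] subring_power[OF A a] by blast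
    then show ?case
      by (simp add: power_mult_distrib mult_ac)
  qed
  moreover have "a * x \<in> A"
    using a x A by (auto simp: subring_def)
  ultimately show ?thesis
    using tight_closureI[OF A _ x(2,3)] by blast
qed

lemma ideal_of_tight_closure:
  fixes A I :: "'k::field set"
  assumes A: "subring A" and I: "I \<subseteq> A" and p: "prime p" "CHAR('k) = p"
  shows "ideal_of A (tight_closure A p I)"
proof (rule ideal_ofI)
  have "(1::'k) * 0 ^ p ^ e \<in> frob_power A (p ^ e) I" for e
    using ideal_of_zero[OF ideal_of_frob_power[OF A I]] p(1) by (simp add: prime_gt_0_nat power_0_left)
  moreover have "0 \<in> A" "1 \<in> A"
    using A by (auto simp: subring_def)
  ultimately show "0 \<in> tight_closure A p I"
    by (intro tight_closureI[OF A _ _ one_neq_zero] always_eventually allI)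
next
  fix x y assume "x \<in> tight_closure A p I" "y \<in> tight_closure A p I"
  then show "x + y \<in> tight_closure A p I"
    by (rule tight_closure_add[OF A I p])
next
  fix a x assume "a \<in> A" "x \<in> tight_closure A p I"
  then show "a * x \<in> tight_closure A p I"
    by (rule tight_closure_mult[OF A I])
qed (rule tight_closure_subset)

lemma tight_closure_mono:
  assumes A: "subring A" and B: "subring B" and AB: "A \<subseteq> B"
    and "I \<subseteq> A" "I \<subseteq> J" "J \<subseteq> B"
  shows "tight_closure A p I \<subseteq> tight_closure B p J"
proof
  fix z assume "z \<in> tight_closure A p I"
  then obtain c where
    z: "z \<in> A" "c \<in> A" "c \<noteq> 0" "\<forall>\<^sub>F e in sequentially. c * z ^ p ^ e \<in> frob_power A (p ^ e) I"
    by (elim tight_closureE[OF A])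
  have "\<forall>\<^sub>F e in sequentially. c * z ^ p ^ e \<in> frob_power B (p ^ e) J"
    by (rule eventually_mono[OF z(4)], rule subsetD[OF frob_power_mono[OF A B AB assms(4-6)]])
  then show "z \<in> tight_closure B p J"
    using tight_closureI[OF B] z(1-3) AB by blast
qed

lemma localizeI: "a \<in> A \<Longrightarrow> u \<in> U \<Longrightarrow> a / u \<in> localize A U"
  unfolding localize_def by blast

lemma localizeE:
  assumes "z \<in> localize A U"
  obtains a u where "a \<in> A" "u \<in> U" "z = a / u"
  using assms unfolding localize_def by blast

lemma subring_localize:
  assumes A: "subring A" and U: "mult_system A U" "0 \<notin> U"
  shows "subring (localize A U)"
proof -
  have fraction_ops: "x + y \<in> localize A U \<and> x - y \<in> localize A U \<and> x * y \<in> localize A U"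
    if "a \<in> A" "u \<in> U" "b \<in> A" "v \<in> U" "x = a / u" "y = b / v" for x y a b u v
  proof -
    have "u \<noteq> 0" "v \<noteq> 0" "u \<in> A" "v \<in> A" "u * v \<in> U"
      using that U unfolding mult_system_def by auto
    then have "x + y = (a * v + b * u) / (u * v)" "x - y = (a * v - b * u) / (u * v)"
      "x * y = (a * b) / (u * v)"
      using that(5,6) by (simp_all add: field_simps)
    moreover have "a * v + b * u \<in> A" "a * v - b * u \<in> A" "a * b \<in> A"
      using that A \<open>u \<in> A\<close> \<open>v \<in> A\<close> unfolding subring_def by auto
    ultimately show ?thesis
      using localizeI[of _ A "u * v" U] \<open>u * v \<in> U\<close> by simp
  qed
  have "0 \<in> localize A U" "1 \<in> localize A U"
    using localizeI[of 0 A 1 U] localizeI[of 1 A 1 U] A U by (auto simp: subring_def mult_system_def)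
  then show ?thesis
    unfolding subring_def by (metis localizeE fraction_ops)
qed

lemma subset_localize: "mult_system A U \<Longrightarrow> A \<subseteq> localize A U"
  using localizeI[of _ A 1 U] unfolding mult_system_def by force

lemma localize_mono: "A \<subseteq> B \<Longrightarrow> localize A U \<subseteq> localize B U"
  unfolding localize_def by blast

lemma ideal_of_fractions:
  assumes U: "mult_system A U" "0 \<notin> U" and J: "ideal_of A J"
  shows "ideal_of (localize A U) {y / u | y u. y \<in> J \<and> u \<in> U}" (is "ideal_of _ ?E")
proof (rule ideal_ofI)
  have U1: "1 \<in> U" and UA: "U \<subseteq> A" and Umult: "\<And>u v. u \<in> U \<Longrightarrow> v \<in> U \<Longrightarrow> u * v \<in> U"
    using U unfolding mult_system_def by auto
  show "?E \<subseteq> localize A U"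
    using J unfolding ideal_of_def localize_def by blast
  show "0 \<in> ?E"
    using U1 ideal_of_zero[OF J] by force
next
  fix x y assume "x \<in> ?E" "y \<in> ?E"
  then obtain a u b v where ab: "a \<in> J" "b \<in> J" and uv: "u \<in> U" "v \<in> U"
    and xy: "x = a / u" "y = b / v"
    by (auto simp only: mem_Collect_eq)
  have "u \<noteq> 0" "v \<noteq> 0"
    using uv U(2) by auto
  then have "x + y = (a * v + b * u) / (u * v)"
    unfolding xy by (rule add_frac_eq)
  moreover have uv_A: "u \<in> A" "v \<in> A" "u * v \<in> U"
    using uv U(1) unfolding mult_system_def by auto
  moreover have "a * v + b * u \<in> J"
    using ideal_of_add[OF J ideal_of_mult[OF J uv_A(2) ab(1)] ideal_of_mult[OF J uv_A(1) ab(2)]]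
    by (simp only: mult.commute)
  ultimately show "x + y \<in> ?E"
    by blast
next
  fix c x assume c: "c \<in> localize A U" and "x \<in> ?E"
  then obtain a u where "a \<in> J" "u \<in> U" "x = a / u"
    by (auto simp only: mem_Collect_eq)
  moreover obtain b v where "b \<in> A" "v \<in> U" "c = b / v"
    using c by (rule localizeE)
  ultimately have ba: "b \<in> A" "a \<in> J" and vu: "v \<in> U" "u \<in> U" and cx: "c = b / v" "x = a / u"
    by simp_all
  have "c * x = (b * a) / (v * u)"
    using cx by simp
  moreover have "b * a \<in> J" "v * u \<in> U"
    using ideal_of_mult[OF J ba] vu U(1) unfolding mult_system_def by auto
  ultimately show "c * x \<in> ?E"
    by blast
qed

lemma gen_ideal_localize:
  assumes A: "subring A" and U: "mult_system A U" "0 \<notin> U" and X: "X \<subseteq> A"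
  shows "gen_ideal (localize A U) X = {y / u | y u. y \<in> gen_ideal A X \<and> u \<in> U}"
    (is "_ = ?E")
proof
  have "X \<subseteq> ?E"
  proof
    fix x assume "x \<in> X"
    then have "x / 1 \<in> ?E"
      using subset_gen_ideal U(1) unfolding mult_system_def by blast
    then show "x \<in> ?E"
      by simp
  qed
  then show "gen_ideal (localize A U) X \<subseteq> ?E"
    by (rule gen_ideal_least[OF ideal_of_fractions[OF U ideal_of_gen_ideal[OF A X]]])
next
  have "gen_ideal A X \<subseteq> gen_ideal (localize A U) X"
    using subring_localize[OF A U] subset_localize[OF U(1)] A X
    by (intro gen_ideal_mono) auto
  moreover have "ideal_of (localize A U) (gen_ideal (localize A U) X)"
    using subring_localize[OF A U] subset_localize[OF U(1)] X
    by (intro ideal_of_gen_ideal) auto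
  moreover have "1 / u \<in> localize A U" if "u \<in> U" for u
    using localizeI[OF _ that] A by (auto simp: subring_def)
  ultimately show "?E \<subseteq> gen_ideal (localize A U) X"
    using ideal_of_mult by fastforce
qed

lemma localize_inter_gen_ideal:
  assumes R: "subring R" and S: "subring S" and RS: "R \<subseteq> S"
    and U: "mult_system R U" "0 \<notin> U" and J: "ideal_of S J"
  shows "localize R U \<inter> gen_ideal (localize S U) J \<subseteq> {y / u | y u. y \<in> R \<inter> J \<and> u \<in> U}"
proof
  fix z assume "z \<in> localize R U \<inter> gen_ideal (localize S U) J"
  moreover have "mult_system S U"
    using U(1) RS unfolding mult_system_def by auto
  ultimately obtain r v w u where
    r: "r \<in> R" "v \<in> U" "z = r / v" and w: "w \<in> J" "u \<in> U" "z = w / u"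
    using gen_ideal_localize[OF S _ U(2)] gen_ideal_ideal[OF J] J
    by (auto elim: localizeE simp: ideal_of_def)
  have "u \<noteq> 0" "v \<noteq> 0"
    using r w U(2) by auto
  moreover have "w / u = r / v"
    using r(3) w(3) by simp
  ultimately have "w * v = r * u" and z: "z = (w * v) / (u * v)"
    using w(3) by (simp_all add: frac_eq_eq)
  moreover have "r * u \<in> R" "v * w \<in> J" "u * v \<in> U"
    using r w R RS J U(1) unfolding subring_def mult_system_def
    by (auto intro: ideal_of_mult)
  ultimately have "w * v \<in> R \<inter> J" "u * v \<in> U"
    by (simp_all add: mult.commute)
  with z show "z \<in> {y / u | y u. y \<in> R \<inter> J \<and> u \<in> U}"
    by blast
qed

definition rspan :: "'k::field set \<Rightarrow> 'k set \<Rightarrow> 'k set" where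
  "rspan R F = {\<Sum>f\<in>F. r f * f | r. \<forall>f\<in>F. r f \<in> R}"

definition linear_functional :: "'k::field set \<Rightarrow> 'k set \<Rightarrow> ('k \<Rightarrow> 'k) \<Rightarrow> bool" where
  "linear_functional R M \<phi> \<longleftrightarrow> (\<forall>s\<in>M. \<phi> s \<in> R) \<and>
     (\<forall>s\<in>M. \<forall>t\<in>M. \<phi> (s + t) = \<phi> s + \<phi> t) \<and> (\<forall>r\<in>R. \<forall>s\<in>M. \<phi> (r * s) = r * \<phi> s)"

lemma rspanI: "(\<And>f. f \<in> F \<Longrightarrow> r f \<in> R) \<Longrightarrow> (\<Sum>f\<in>F. r f * f) \<in> rspan R F"
  unfolding rspan_def by blast

lemma rspan_add:
  assumes R: "subring R" and "s \<in> rspan R F" "t \<in> rspan R F"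
  shows "s + t \<in> rspan R F"
proof -
  obtain a where a: "\<And>f. f \<in> F \<Longrightarrow> a f \<in> R" "s = (\<Sum>f\<in>F. a f * f)"
    using assms(2) unfolding rspan_def by blast
  obtain b where b: "\<And>f. f \<in> F \<Longrightarrow> b f \<in> R" "t = (\<Sum>f\<in>F. b f * f)"
    using assms(3) unfolding rspan_def by blast
  have "s + t = (\<Sum>f\<in>F. (a f + b f) * f)"
    using a(2) b(2) by (simp add: sum.distrib distrib_right)
  also have "\<dots> \<in> rspan R F"
    using R a(1) b(1) by (intro rspanI) (simp add: subring_def)
  finally show ?thesis .
qed

lemma rspan_diff:
  assumes R: "subring R" and "s \<in> rspan R F" "t \<in> rspan R F"
  shows "s - t \<in> rspan R F"
proof -
  obtain a where a: "\<And>f. f \<in> F \<Longrightarrow> a f \<in> R" "s = (\<Sum>f\<in>F. a f * f)"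
    using assms(2) unfolding rspan_def by blast
  obtain b where b: "\<And>f. f \<in> F \<Longrightarrow> b f \<in> R" "t = (\<Sum>f\<in>F. b f * f)"
    using assms(3) unfolding rspan_def by blast
  have "s - t = (\<Sum>f\<in>F. (a f - b f) * f)"
    using a(2) b(2) by (simp add: sum_subtractf left_diff_distrib)
  also have "\<dots> \<in> rspan R F"
    using R a(1) b(1) by (intro rspanI) (simp add: subring_def)
  finally show ?thesis .
qed

lemma rspan_smult:
  assumes R: "subring R" and c: "c \<in> R" and "s \<in> rspan R F"
  shows "c * s \<in> rspan R F"
proof -
  obtain a where a: "\<And>f. f \<in> F \<Longrightarrow> a f \<in> R" "s = (\<Sum>f\<in>F. a f * f)"
    using assms(3) unfolding rspan_def by blast
  have "c * s = (\<Sum>f\<in>F. (c * a f) * f)"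
    using a(2) by (simp add: sum_distrib_left mult.assoc)
  also have "\<dots> \<in> rspan R F"
    using R c a(1) by (intro rspanI) (simp add: subring_def)
  finally show ?thesis .
qed

lemma mem_rspan_insert:
  assumes "finite G" "f \<notin> G"
  shows "m \<in> rspan R (insert f G) \<longleftrightarrow> (\<exists>a\<in>R. m - a * f \<in> rspan R G)"
proof
  assume "m \<in> rspan R (insert f G)"
  then obtain r where "\<forall>g\<in>insert f G. r g \<in> R" "m = (\<Sum>g\<in>insert f G. r g * g)"
    unfolding rspan_def by blast
  then show "\<exists>a\<in>R. m - a * f \<in> rspan R G"
    using assms unfolding rspan_def by (auto intro!: bexI[of _ "r f"])
next
  assume "\<exists>a\<in>R. m - a * f \<in> rspan R G"
  then obtain a r where "a \<in> R" "\<forall>g\<in>G. r g \<in> R" "m - a * f = (\<Sum>g\<in>G. r g * g)"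
    unfolding rspan_def by blast
  moreover have "(\<Sum>g\<in>G. (r(f := a)) g * g) = (\<Sum>g\<in>G. r g * g)"
    using assms(2) by (intro sum.cong) auto
  ultimately show "m \<in> rspan R (insert f G)"
    using assms unfolding rspan_def
    by (auto intro!: exI[of _ "r(f := a)"] simp: algebra_simps)
qed

lemma rspan_insert_mult:
  assumes R: "subring R" and G: "finite G" "f \<notin> G"
    and r: "r \<in> R" "r * f \<in> rspan R G" and m: "m \<in> rspan R (insert f G)"
  shows "r * m \<in> rspan R G"
proof -
  obtain a where a: "a \<in> R" "m - a * f \<in> rspan R G"
    using m unfolding mem_rspan_insert[OF G] by blast
  have "r * m = r * (m - a * f) + a * (r * f)"
    by (simp add: algebra_simps)
  also have "\<dots> \<in> rspan R G"
    using rspan_add[OF R rspan_smult[OF R r(1) a(2)] rspan_smult[OF R a(1) r(2)]] .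
  finally show ?thesis .
qed

lemma rspan_insert_coordinate_unique:
  assumes R: "subring R" and free: "\<And>r. r \<in> R \<Longrightarrow> r * f \<in> rspan R G \<Longrightarrow> r = 0"
    and a: "a \<in> R" "m - a * f \<in> rspan R G" and b: "b \<in> R" "m - b * f \<in> rspan R G"
  shows "a = b"
proof -
  have "(a - b) * f = (m - b * f) - (m - a * f)"
    by (simp add: algebra_simps)
  also have "\<dots> \<in> rspan R G"
    using rspan_diff[OF R b(2) a(2)] .
  finally have "(a - b) * f \<in> rspan R G" .
  moreover have "a - b \<in> R"
    using R a(1) b(1) unfolding subring_def by blast
  ultimately show ?thesis
    using free by force
qed

lemma linear_functional_mult:
  assumes "linear_functional R N \<psi>" "\<And>m. m \<in> M \<Longrightarrow> r * m \<in> N"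
  shows "linear_functional R M (\<lambda>m. \<psi> (r * m))"
  using assms unfolding linear_functional_def by (auto simp: distrib_left mult.left_commute)

lemma linear_functional_projection:
  assumes \<psi>: "linear_functional R N \<psi>" and \<kappa>: "linear_functional R M \<kappa>"
    and proj: "\<And>m. m \<in> M \<Longrightarrow> m - \<kappa> m * f \<in> N"
  shows "linear_functional R M (\<lambda>m. \<psi> (m - \<kappa> m * f))"
  unfolding linear_functional_def
proof (intro conjI ballI)
  fix s assume s: "s \<in> M"
  show "\<psi> (s - \<kappa> s * f) \<in> R"
    using \<psi> proj[OF s] unfolding linear_functional_def by blast
  fix t assume t: "t \<in> M"
  have split: "s + t - \<kappa> (s + t) * f = (s - \<kappa> s * f) + (t - \<kappa> t * f)"
    using \<kappa> s t unfolding linear_functional_def by (simp add: algebra_simps)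
  show "\<psi> (s + t - \<kappa> (s + t) * f) = \<psi> (s - \<kappa> s * f) + \<psi> (t - \<kappa> t * f)"
    unfolding split using \<psi> proj[OF s] proj[OF t] unfolding linear_functional_def by blast
next
  fix a s assume a: "a \<in> R" and s: "s \<in> M"
  have scale: "a * s - \<kappa> (a * s) * f = a * (s - \<kappa> s * f)"
    using \<kappa> a s unfolding linear_functional_def by (simp add: algebra_simps)
  show "\<psi> (a * s - \<kappa> (a * s) * f) = a * \<psi> (s - \<kappa> s * f)"
    unfolding scale using \<psi> a proj[OF s] unfolding linear_functional_def by blast
qed

lemma rspan_insert_coordinate:
  assumes R: "subring R" and G: "finite G" "f \<notin> G"
    and free: "\<And>r. r \<in> R \<Longrightarrow> r * f \<in> rspan R G \<Longrightarrow> r = 0"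
  obtains \<kappa> where "linear_functional R (rspan R (insert f G)) \<kappa>"
    and "\<And>m. m \<in> rspan R (insert f G) \<Longrightarrow> m - \<kappa> m * f \<in> rspan R G"
proof -
  let ?M = "rspan R (insert f G)" and ?N = "rspan R G"
  define \<kappa> where "\<kappa> m = (SOME a. a \<in> R \<and> m - a * f \<in> ?N)" for m
  have \<kappa>: "\<kappa> m \<in> R \<and> m - \<kappa> m * f \<in> ?N" if "m \<in> ?M" for m
    using that mem_rspan_insert[OF G] unfolding \<kappa>_def by (metis (no_types, lifting) someI_ex)
  have \<kappa>_unique: "\<kappa> m = a" if "m \<in> ?M" "a \<in> R" "m - a * f \<in> ?N" for m a
    using rspan_insert_coordinate_unique[OF R free] \<kappa>[OF that(1)] that(2,3) by blast
  have "linear_functional R ?M \<kappa>"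
    unfolding linear_functional_def
  proof (intro conjI ballI)
    fix s assume s: "s \<in> ?M"
    show "\<kappa> s \<in> R"
      using \<kappa>[OF s] by blast
    fix t assume t: "t \<in> ?M"
    have "s + t - (\<kappa> s + \<kappa> t) * f = (s - \<kappa> s * f) + (t - \<kappa> t * f)"
      by (simp add: algebra_simps)
    also have "\<dots> \<in> ?N"
      using rspan_add[OF R] \<kappa>[OF s] \<kappa>[OF t] by blast
    finally have "s + t - (\<kappa> s + \<kappa> t) * f \<in> ?N" .
    moreover have "\<kappa> s + \<kappa> t \<in> R"
      using R \<kappa>[OF s] \<kappa>[OF t] by (simp add: subring_def)
    ultimately show "\<kappa> (s + t) = \<kappa> s + \<kappa> t"
      using \<kappa>_unique[OF rspan_add[OF R s t]] by blast
  next
    fix a s assume a: "a \<in> R" and s: "s \<in> ?M"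
    have "a * s - (a * \<kappa> s) * f = a * (s - \<kappa> s * f)"
      by (simp add: algebra_simps)
    also have "\<dots> \<in> ?N"
      using rspan_smult[OF R a] \<kappa>[OF s] by blast
    finally have "a * s - (a * \<kappa> s) * f \<in> ?N" .
    moreover have "a * \<kappa> s \<in> R"
      using R a \<kappa>[OF s] by (simp add: subring_def)
    ultimately show "\<kappa> (a * s) = a * \<kappa> s"
      using \<kappa>_unique[OF rspan_smult[OF R a s]] by blast
  qed
  with \<kappa> show ?thesis
    using that by blast
qed

lemma linear_functional_nonvanishing:
  assumes R: "subring R" and F: "finite F"
  shows "c \<in> rspan R F \<Longrightarrow> c \<noteq> 0 \<Longrightarrow> \<exists>\<phi>. linear_functional R (rspan R F) \<phi> \<and> \<phi> c \<noteq> 0"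
  using F
proof (induction F arbitrary: c rule: finite_induct)
  case empty
  then show ?case
    by (simp add: rspan_def)
next
  case (insert f G)
  let ?M = "rspan R (insert f G)" and ?N = "rspan R G"
  show ?case
  proof (cases "\<exists>r\<in>R. r \<noteq> 0 \<and> r * f \<in> ?N")
    case True
    then obtain r where r: "r \<in> R" "r \<noteq> 0" "r * f \<in> ?N"
      by blast
    have rM: "r * m \<in> ?N" if "m \<in> ?M" for m
      using rspan_insert_mult[OF R insert(1,2) r(1,3) that] .
    obtain \<psi> where "linear_functional R ?N \<psi>" "\<psi> (r * c) \<noteq> 0"
      using insert.IH[of "r * c"] rM[OF insert.prems(1)] insert.prems(2) r(2) by auto
    then show ?thesis
      using linear_functional_mult[OF _ rM] by blast
  next
    case False
    then obtain \<kappa> where \<kappa>: "linear_functional R ?M \<kappa>" "\<And>m. m \<in> ?M \<Longrightarrow> m - \<kappa> m * f \<in> ?N"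
      using rspan_insert_coordinate[OF R insert(1,2)] by blast
    show ?thesis
    proof (cases "\<kappa> c = 0")
      case True
      then obtain \<psi> where "linear_functional R ?N \<psi>" "\<psi> c \<noteq> 0"
        using insert.IH \<kappa>(2)[OF insert.prems(1)] insert.prems(2) by auto
      with True show ?thesis
        using linear_functional_projection[OF _ \<kappa>] by fastforce
    qed (use \<kappa>(1) in blast)
  qed
qed

lemma linear_functional_gen_ideal:
  assumes R: "subring R" and S: "subring S" and RS: "R \<subseteq> S"
    and \<phi>: "linear_functional R S \<phi>" and J: "J \<subseteq> R"
  shows "\<phi> ` gen_ideal S J \<subseteq> gen_ideal R J"
proof -
  have IJ: "ideal_of R (gen_ideal R J)"
    using ideal_of_gen_ideal[OF R J] .
  have S_ops: "0 \<in> S" "1 \<in> S" "\<And>a b. a \<in> S \<Longrightarrow> b \<in> S \<Longrightarrow> a + b \<in> S \<and> a * b \<in> S"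
    using S by (auto simp: subring_def)
  have \<phi>_R: "\<phi> s \<in> R" and \<phi>_add: "\<phi> (s + t) = \<phi> s + \<phi> t" if "s \<in> S" "t \<in> S" for s t
    using \<phi> that unfolding linear_functional_def by auto
  have \<phi>_mult: "\<phi> (r * s) = r * \<phi> s" if "r \<in> R" "s \<in> S" for r s
    using \<phi> that unfolding linear_functional_def by auto
  let ?K = "{s \<in> S. \<forall>t\<in>S. \<phi> (t * s) \<in> gen_ideal R J}"
  have "ideal_of S ?K"
  proof (rule ideal_ofI)
    have "\<phi> 0 = 0"
      using \<phi>_mult[of 0 0] R S_ops(1) by (simp add: subring_def)
    then show "0 \<in> ?K"
      using S_ops(1) ideal_of_zero[OF IJ] by simp
  next
    fix x y assume "x \<in> ?K" "y \<in> ?K"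
    then show "x + y \<in> ?K"
      using S_ops(3) \<phi>_add ideal_of_add[OF IJ] by (simp add: distrib_left)
  next
    fix a x assume "a \<in> S" "x \<in> ?K"
    then show "a * x \<in> ?K"
      using S_ops(3) by (simp add: mult.assoc[symmetric])
  qed auto
  moreover have "J \<subseteq> ?K"
  proof
    fix j assume j: "j \<in> J"
    have "\<phi> (t * j) \<in> gen_ideal R J" if t: "t \<in> S" for t
    proof -
      have "\<phi> (t * j) = \<phi> t * j"
        using \<phi>_mult[of j t] j J t by (auto simp: mult.commute)
      also have "\<dots> \<in> gen_ideal R J"
        using ideal_of_mult[OF IJ \<phi>_R[OF t t]] subset_gen_ideal j by blast
      finally show ?thesis .
    qed
    then show "j \<in> ?K"
      using j J RS by blast
  qed
  ultimately have "gen_ideal S J \<subseteq> ?K"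
    by (rule gen_ideal_least)
  then show ?thesis
    using S_ops(2) by force
qed

lemma tight_closure_contraction:
  fixes R S I :: "'k::field set"
  assumes R: "subring R" and S: "subring S" and RS: "R \<subseteq> S"
    and fin: "finite_module_over R S" and I: "I \<subseteq> R" and p: "prime p" "CHAR('k) = p"
    and x: "x \<in> R" "x \<in> tight_closure S p (gen_ideal S I)"
  shows "x \<in> tight_closure R p I"
proof -
  obtain c where c: "c \<in> S" "c \<noteq> 0"
    "\<forall>\<^sub>F e in sequentially. c * x ^ p ^ e \<in> frob_power S (p ^ e) (gen_ideal S I)"
    by (rule tight_closureE[OF S x(2)])
  obtain F where "finite F" "S = rspan R F"
    using fin unfolding finite_module_over_def rspan_def by blast
  then obtain \<phi> where \<phi>: "linear_functional R S \<phi>" "\<phi> c \<noteq> 0"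
    using linear_functional_nonvanishing[OF R] c(1,2) by blast
  have "\<forall>\<^sub>F e in sequentially. \<phi> c * x ^ p ^ e \<in> frob_power R (p ^ e) I"
    using c(3)
  proof eventually_elim
    case (elim e)
    let ?J = "(\<lambda>y. y ^ p ^ e) ` I"
    have "c * x ^ p ^ e \<in> gen_ideal S ?J"
      using elim frob_power_gen_ideal[OF S _ p] I RS unfolding frob_power_def by auto
    moreover have "?J \<subseteq> R"
      using I subring_power[OF R] by blast
    ultimately have "\<phi> (c * x ^ p ^ e) \<in> gen_ideal R ?J"
      using linear_functional_gen_ideal[OF R S RS \<phi>(1)] by blast
    moreover have "\<phi> (x ^ p ^ e * c) = x ^ p ^ e * \<phi> c"
      using \<phi>(1) subring_power[OF R x(1)] c(1) unfolding linear_functional_def by blast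
    ultimately show ?case
      unfolding frob_power_def by (simp add: mult.commute)
  qed
  moreover have "\<phi> c \<in> R"
    using \<phi>(1) c(1) unfolding linear_functional_def by blast
  ultimately show ?thesis
    using tight_closureI[OF R x(1)] \<phi>(2) by blast
qed


lemma localize_tight_closure_subset:
  fixes A I :: "'k::field set"
  assumes A: "subring A" and U: "mult_system A U" "0 \<notin> U" and I: "I \<subseteq> A"
    and p: "prime p" "CHAR('k) = p"
  shows "gen_ideal (localize A U) (tight_closure A p I)
    \<subseteq> tight_closure (localize A U) p (gen_ideal (localize A U) I)"
proof -
  have AU: "subring (localize A U)" and A_AU: "A \<subseteq> localize A U"
    using subring_localize[OF A U] subset_localize[OF U(1)] .
  have gen: "gen_ideal (localize A U) I \<subseteq> localize A U"
    using gen_ideal_subset[OF AU] I A_AU by blast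
  show ?thesis
    by (rule gen_ideal_least[OF ideal_of_tight_closure[OF AU gen p]
          tight_closure_mono[OF A AU A_AU I subset_gen_ideal gen]])
qed

lemma tight_closure_localize_descends:
  fixes R S I :: "'k::field set"
  assumes R: "subring R" and S: "subring S" and RS: "R \<subseteq> S" and fin: "finite_module_over R S"
    and U: "mult_system R U" "0 \<notin> U" and I: "I \<subseteq> R" and p: "prime p" "CHAR('k) = p"
    and commutes: "gen_ideal (localize S U) (tight_closure S p (gen_ideal S I))
      = tight_closure (localize S U) p (gen_ideal (localize S U) (gen_ideal S I))"
  shows "tight_closure (localize R U) p (gen_ideal (localize R U) I)
    \<subseteq> gen_ideal (localize R U) (tight_closure R p I)"
proof
  let ?RU = "localize R U" and ?SU = "localize S U" and ?IS = "gen_ideal S I"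
  let ?TS = "tight_closure S p ?IS"
  have US: "mult_system S U"
    using U(1) RS unfolding mult_system_def by auto
  have RU: "subring ?RU" and SU: "subring ?SU" and RU_SU: "?RU \<subseteq> ?SU" and S_SU: "S \<subseteq> ?SU"
    using subring_localize[OF R U] subring_localize[OF S US U(2)] localize_mono[OF RS]
      subset_localize[OF US] .
  have I_RU: "I \<subseteq> ?RU" and IS: "I \<subseteq> S"
    using I RS subset_localize[OF U(1)] by auto
  have gen_RU: "gen_ideal ?RU I \<subseteq> ?RU" and gen_S: "?IS \<subseteq> S"
    and gen_SU: "gen_ideal ?SU ?IS \<subseteq> ?SU"
    using gen_ideal_subset[OF RU I_RU] gen_ideal_subset[OF S IS]
      gen_ideal_subset[OF SU order_trans[OF gen_ideal_subset[OF S IS] S_SU]] .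
  fix z assume z: "z \<in> tight_closure ?RU p (gen_ideal ?RU I)"
  have "gen_ideal ?RU I \<subseteq> gen_ideal ?SU ?IS"
    using gen_S S_SU by (intro gen_ideal_mono[OF RU SU RU_SU I_RU subset_gen_ideal]) auto
  then have "z \<in> gen_ideal ?SU ?TS"
    unfolding commutes by (rule subsetD[OF tight_closure_mono[OF RU SU RU_SU gen_RU _ gen_SU] z])
  then have "z \<in> ?RU \<inter> gen_ideal ?SU ?TS"
    using z tight_closure_subset by blast
  then obtain y u where "y \<in> R" "y \<in> ?TS" "u \<in> U" "z = y / u"
    using localize_inter_gen_ideal[OF R S RS U ideal_of_tight_closure[OF S gen_S p]] by blast
  moreover from this have "y \<in> gen_ideal R (tight_closure R p I)"
    using tight_closure_contraction[OF R S RS fin I p] subset_gen_ideal by blast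
  ultimately show "z \<in> gen_ideal ?RU (tight_closure R p I)"
    unfolding gen_ideal_localize[OF R U tight_closure_subset] by blast
qed

theorem lemma2:
  fixes R S :: "'k::field set" and p :: nat
  assumes "prime p" and "CHAR('k) = p"
    and "subring R" and "subring S" and "R \<subseteq> S"
    and "noetherian R"
    and "finite_module_over R S"
    and "tc_commutes_loc S p"
  shows "tc_commutes_loc R p"
  unfolding tc_commutes_loc_def
proof (intro allI impI, elim conjE)
  fix I U assume I: "ideal_of R I" and U: "mult_system R U" "0 \<notin> U"
  have IR: "I \<subseteq> R"
    using I by (simp add: ideal_of_def)
  have "ideal_of S (gen_ideal S I)" and "mult_system S U"
    using ideal_of_gen_ideal[OF assms(4)] IR U(1) assms(5) by (auto simp: mult_system_def)
  then have commutes: "gen_ideal (localize S U) (tight_closure S p (gen_ideal S I))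
      = tight_closure (localize S U) p (gen_ideal (localize S U) (gen_ideal S I))"
    using assms(8) U(2) unfolding tc_commutes_loc_def by simp
  show "gen_ideal (localize R U) (tight_closure R p I)
      = tight_closure (localize R U) p (gen_ideal (localize R U) I)"
    using localize_tight_closure_subset[OF assms(3) U IR assms(1,2)]
      tight_closure_localize_descends[OF assms(3-5,7) U IR assms(1,2) commutes]
    by (rule subset_antisym)
qed

end
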